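(* Let $\mathcal{C}$, $\mathcal{X}$, $\mathcal{I}$ be three similar configurations of $d$ doors, where $\mathcal{X}$ is cascading and $\mathcal{I}$ is independent. Then for every knock sequence $\pi$, $$\mathbb{T}_{\mathcal{I}}(\pi)\le \mathbb{T}_{\mathcal{C}}(\pi)\le \mathbb{T}_{\mathcal{X}}(\pi),$$ and consequently $\mathbb{T}_{\mathcal{I}}\le \mathbb{T}_{\mathcal{C}}\le \mathbb{T}_{\mathcal{X}}$.
   Context: Dependent doors model. Fix an integer $d\ge 2$ and doors $1,\dots,d$, all initially closed; once a door opens it stays open forever. A configuration $\mathcal{C}$ specifies for each door $i$ a function $\phi_i^{\mathcal{C}}$ mapping every finite nonempty sequence $(X_1,\dots,X_n)$ of subsets of $\{1,\dots,i-1\}$ to $[0,1]$: $\phi_i^{\mathcal{C}}(X_1,\dots,X_n)$ is the probability that door $i$ has opened during $n$ knocks on it, where $X_j$ is the set of open doors among $\{1,\dots,i-1\}$ at the time of the $j$-th knock on door $i$ (so a closed door $i$ opens at its $n$-th knock with conditional probability $(\phi_i(X_1..X_n)-\phi_i(X_1..X_{n-1}))/(1-\phi_i(X_1..X_{n-1}))$, with $\phi_i$ of the empty sequence equal to $0$). Configurations are assumed monotone ($\phi_i(X')\le\phi_i(X)$ whenever $X'$ is a, not necessarily consecutive, subsequence of $X$) and positively correlated ($\phi_i(X'_1,\dots,X'_n)\le\phi_i(X_1,\dots,X_n)$ whenever $X'_j\subseteq X_j$ for all $j$). The fundamental distribution of door $i$ is $p_i(n)=1-\phi_i(\{1,\dots,i-1\}^n)$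 ($p_i(0)=1$), and $E_i=\sum_{n\ge0}p_i(n)$ is assumed finite. Two configurations are similar if for every $i$ door $i$ has the same fundamental distribution in both. A configuration is independent if $\phi_i(X_1,\dots,X_k)=\phi_i(\{1,\dots,i-1\}^k)$ for all inputs, and cascading if $\phi_i(X_1,\dots,X_k)=\phi_i(\{1,\dots,i-1\}^t)$ where $t$ is the number of $j$ with $X_j=\{1,\dots,i-1\}$. A knock sequence $\pi$ is an infinite sequence of door indices, executed in order without any feedback; $\mathbb{T}_{\mathcal{C}}(\pi)$ is the expected number of knocks until all $d$ doors are open, and $\mathbb{T}_{\mathcal{C}}=\inf_\pi \mathbb{T}_{\mathcal{C}}(\pi)$. *)

theory Defs
  imports Complex_Main "HOL-Library.Sublist" "HOL-Library.Extended_Nonnegative_Real"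
begin

text \<open>Doors are 1..d. A configuration is given by phi :: nat => nat set list => real,
  where phi i [X_1,...,X_n] is the probability that door i has opened during n knocks,
  X_j being the set of open doors among 1..i-1 at the j-th knock on door i.
  phiz extends phi by the value 0 on the empty sequence.\<close>

definition phiz :: "(nat \<Rightarrow> nat set list \<Rightarrow> real) \<Rightarrow> nat \<Rightarrow> nat set list \<Rightarrow> real" where
  "phiz phi i xs = (if xs = [] then 0 else phi i xs)"

definition valid_input :: "nat \<Rightarrow> nat set list \<Rightarrow> bool" where
  "valid_input i xs \<longleftrightarrow> (\<forall>X\<in>set xs. X \<subseteq> {1..<i})"

definition fund :: "(nat \<Rightarrow> nat set list \<Rightarrow> real) \<Rightarrow> nat \<Rightarrow> nat \<Rightarrow> real" where
  "fund phi i n = 1 - phiz phi i (replicate n {1..<i})"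

text \<open>A (monotone, positively correlated) configuration of d doors with finite E_i.\<close>
definition configuration :: "nat \<Rightarrow> (nat \<Rightarrow> nat set list \<Rightarrow> real) \<Rightarrow> bool" where
  "configuration d phi \<longleftrightarrow>
     (\<forall>i\<in>{1..d}. \<forall>xs. xs \<noteq> [] \<and> valid_input i xs \<longrightarrow> 0 \<le> phi i xs \<and> phi i xs \<le> 1)
   \<and> (\<forall>i\<in>{1..d}. \<forall>xs ys. valid_input i xs \<and> valid_input i ys \<and> subseq ys xs
        \<longrightarrow> phiz phi i ys \<le> phiz phi i xs)
   \<and> (\<forall>i\<in>{1..d}. \<forall>xs ys. valid_input i xs \<and> valid_input i ys \<and> list_all2 (\<subseteq>) ys xs
        \<longrightarrow> phiz phi i ys \<le> phiz phi i xs)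
   \<and> (\<forall>i\<in>{1..d}. summable (fund phi i))"

definition similar :: "nat \<Rightarrow> (nat \<Rightarrow> nat set list \<Rightarrow> real) \<Rightarrow> (nat \<Rightarrow> nat set list \<Rightarrow> real) \<Rightarrow> bool" where
  "similar d phi psi \<longleftrightarrow> (\<forall>i\<in>{1..d}. \<forall>n. fund phi i n = fund psi i n)"

definition independent_config :: "nat \<Rightarrow> (nat \<Rightarrow> nat set list \<Rightarrow> real) \<Rightarrow> bool" where
  "independent_config d phi \<longleftrightarrow> (\<forall>i\<in>{1..d}. \<forall>xs. xs \<noteq> [] \<and> valid_input i xs \<longrightarrow>
      phi i xs = phi i (replicate (length xs) {1..<i}))"

definition cascading_config :: "nat \<Rightarrow> (nat \<Rightarrow> nat set list \<Rightarrow> real) \<Rightarrow> bool" where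
  "cascading_config d phi \<longleftrightarrow> (\<forall>i\<in>{1..d}. \<forall>xs. xs \<noteq> [] \<and> valid_input i xs \<longrightarrow>
      phi i xs = phiz phi i (replicate (length (filter (\<lambda>X. X = {1..<i}) xs)) {1..<i}))"

definition knock_seq :: "nat \<Rightarrow> (nat \<Rightarrow> nat) \<Rightarrow> bool" where
  "knock_seq d \<pi> \<longleftrightarrow> (\<forall>t. \<pi> t \<in> {1..d})"

text \<open>One step of the process. chron = [S_0, ..., S_t] are the sets of open doors
  before knocks 0..t (S_0 = {}); knock number t is on door \<pi> t. Returns the
  probability that the set of open doors after knock t is S'.\<close>
definition step_prob :: "(nat \<Rightarrow> nat set list \<Rightarrow> real) \<Rightarrow> (nat \<Rightarrow> nat) \<Rightarrow> nat set list \<Rightarrow> nat set \<Rightarrow> real" where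
  "step_prob phi \<pi> chron S' =
    (let t = length chron - 1; S = last chron; i = \<pi> t in
     if i \<in> S then (if S' = S then 1 else 0)
     else
       (let Xs = map (\<lambda>s. chron ! s \<inter> {1..<i}) (filter (\<lambda>s. \<pi> s = i) [0..<Suc t]);
            c = (phiz phi i Xs - phiz phi i (butlast Xs)) / (1 - phiz phi i (butlast Xs))
        in if S' = insert i S then c else if S' = S then 1 - c else 0))"

text \<open>Probability of a history, stored most recent first: [S_t, ..., S_1, S_0].\<close>
fun hist_prob :: "(nat \<Rightarrow> nat set list \<Rightarrow> real) \<Rightarrow> (nat \<Rightarrow> nat) \<Rightarrow> nat set list \<Rightarrow> real" where
  "hist_prob phi \<pi> [] = 0"
| "hist_prob phi \<pi> [S] = (if S = {} then 1 else 0)"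
| "hist_prob phi \<pi> (S' # S # rest) =
     hist_prob phi \<pi> (S # rest) * step_prob phi \<pi> (rev (S # rest)) S'"

definition not_done_prob :: "nat \<Rightarrow> (nat \<Rightarrow> nat set list \<Rightarrow> real) \<Rightarrow> (nat \<Rightarrow> nat) \<Rightarrow> nat \<Rightarrow> real" where
  "not_done_prob d phi \<pi> t =
     (\<Sum>h\<in>{h. length h = Suc t \<and> (\<forall>S\<in>set h. S \<subseteq> {1..d})}.
        if hd h = {1..d} then 0 else hist_prob phi \<pi> h)"

text \<open>Expected number of knocks until all doors are open: sum over t of P(T > t).\<close>
definition exp_time :: "nat \<Rightarrow> (nat \<Rightarrow> nat set list \<Rightarrow> real) \<Rightarrow> (nat \<Rightarrow> nat) \<Rightarrow> ennreal" where
  "exp_time d phi \<pi> = (\<Sum>t. ennreal (not_done_prob d phi \<pi> t))"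

definition opt_time :: "nat \<Rightarrow> (nat \<Rightarrow> nat set list \<Rightarrow> real) \<Rightarrow> ennreal" where
  "opt_time d phi = (INF \<pi>\<in>{\<pi>. knock_seq d \<pi>}. exp_time d phi \<pi>)"

end

theory Submission
  imports Defs
begin

text \<open>The probability of a history factors into one factor per door, since the transition
  of door k at a knock depends only on door k itself and on the doors below k. Summing out
  the doors from the top, P(T > N) becomes a nested average in which door k contributes
  the mean of the remaining value over its opening time t, with weights
  phi_k(t+1) - phi_k(t) and 1 - phi_k(N) for "still closed". By Abel summation this mean
  decreases when phi_k increases pointwise, provided the remaining value is nonincreasing
  in the opening time; and the remaining value is antitone in the histories of the lower
  doors because of positive correlation. Among similar configurations, phi_k is pointwise
  largest for the independent one (positive correlation: phi_k(X) is at most phi_k on the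
  all-open input of the same length) and smallest for the cascading one (monotonicity:
  phi_k(X) is at least phi_k on the subsequence of all-open inputs).\<close>

text \<open>A configuration without the summability of its fundamental distributions, which
  the comparison does not need.\<close>

definition monotone_correlated :: "nat \<Rightarrow> (nat \<Rightarrow> nat set list \<Rightarrow> real) \<Rightarrow> bool" where
  "monotone_correlated d phi \<longleftrightarrow>
     (\<forall>k\<in>{1..d}. \<forall>xs. valid_input k xs \<longrightarrow> 0 \<le> phiz phi k xs \<and> phiz phi k xs \<le> 1)
   \<and> (\<forall>k\<in>{1..d}. \<forall>xs ys. valid_input k xs \<and> valid_input k ys \<and> subseq ys xs
        \<longrightarrow> phiz phi k ys \<le> phiz phi k xs)
   \<and> (\<forall>k\<in>{1..d}. \<forall>xs ys. valid_input k xs \<and> valid_input k ys \<and> list_all2 (\<subseteq>) ys xs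
        \<longrightarrow> phiz phi k ys \<le> phiz phi k xs)"

lemma configuration_imp_monotone_correlated:
  "configuration d phi \<Longrightarrow> monotone_correlated d phi"
  unfolding configuration_def monotone_correlated_def by (auto simp: phiz_def)

lemma monotone_correlated_bounds:
  assumes "monotone_correlated d phi" "k \<in> {1..d}" "valid_input k xs"
  shows "0 \<le> phiz phi k xs" "phiz phi k xs \<le> 1"
  using assms unfolding monotone_correlated_def by blast+

lemma monotone_correlated_subseq:
  assumes "monotone_correlated d phi" "k \<in> {1..d}" "valid_input k xs" "valid_input k ys"
    "subseq ys xs"
  shows "phiz phi k ys \<le> phiz phi k xs"
  using assms unfolding monotone_correlated_def by blast

lemma monotone_correlated_subsets:
  assumes "monotone_correlated d phi" "k \<in> {1..d}" "valid_input k xs" "valid_input k ys"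
    "list_all2 (\<subseteq>) ys xs"
  shows "phiz phi k ys \<le> phiz phi k xs"
  using assms unfolding monotone_correlated_def by blast

text \<open>Histories are read chronologically here: c = [S_0, ..., S_N], where S_s is the set
  of open doors before knock s; hist_prob stores them most recent first.\<close>

lemma hist_prob_rev:
  assumes "c \<noteq> []"
  shows "hist_prob phi \<pi> (rev c) = (if c!0 = {} then 1 else 0) *
     (\<Prod>s<length c - 1. step_prob phi \<pi> (take (Suc s) c) (c ! Suc s))"
  using assms
proof (induction c rule: rev_induct)
  case Nil then show ?case by simp
next
  case (snoc x xs)
  show ?case
  proof (cases "xs = []")
    case True then show ?thesis by simp
  next
    case False
    obtain S rest where sr: "rev xs = S # rest" using False
      by (metis list.exhaust rev_is_Nil_conv)
    have "hist_prob phi \<pi> (rev (xs @ [x])) = hist_prob phi \<pi> (rev xs) * step_prob phi \<pi> xs x"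
      using sr by (metis hist_prob.simps(3) rev.simps(2) rev_rev_ident)
    also have "\<dots> = (if xs!0 = {} then 1 else 0) *
     (\<Prod>s<length xs - 1. step_prob phi \<pi> (take (Suc s) xs) (xs ! Suc s)) * step_prob phi \<pi> xs x"
      using snoc.IH False by simp
    also have "(\<Prod>s<length xs - 1. step_prob phi \<pi> (take (Suc s) xs) (xs ! Suc s))
       = (\<Prod>s<length xs - 1. step_prob phi \<pi> (take (Suc s) (xs @ [x])) ((xs @ [x]) ! Suc s))"
      by (rule prod.cong) (auto simp: nth_append)
    also have "step_prob phi \<pi> xs x
        = step_prob phi \<pi> (take (Suc (length xs - 1)) (xs @ [x])) ((xs @ [x]) ! Suc (length xs - 1))"
      using False by simp
    finally show ?thesis using False
      by (simp add: nth_append lessThan_Suc_eq_insert_0 del: prod.lessThan_Suc)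
         (cases "length xs", simp_all add: ac_simps)
  qed
qed

definition histories :: "nat \<Rightarrow> nat \<Rightarrow> nat set list set" where
  "histories N k = {c. length c = Suc N \<and> (\<forall>S\<in>set c. S \<subseteq> {1..k})}"

lemma length_histories: "c \<in> histories N k \<Longrightarrow> length c = Suc N"
  unfolding histories_def by simp

lemma nth_histories: "c \<in> histories N k \<Longrightarrow> r < Suc N \<Longrightarrow> c!r \<subseteq> {1..k}"
  unfolding histories_def by (auto simp: nth_mem)

lemma histories_0: "histories N 0 = {replicate (Suc N) {}}"
  unfolding histories_def by (auto intro: replicate_eqI simp del: replicate_Suc)

definition door_inputs :: "(nat \<Rightarrow> nat) \<Rightarrow> nat \<Rightarrow> nat set list \<Rightarrow> nat \<Rightarrow> nat set list" where
  "door_inputs \<pi> k c n = map (\<lambda>r. c!r \<inter> {1..<k}) (filter (\<lambda>r. \<pi> r = k) [0..<n])"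

definition door_prob ::
    "(nat \<Rightarrow> nat set list \<Rightarrow> real) \<Rightarrow> (nat \<Rightarrow> nat) \<Rightarrow> nat \<Rightarrow> nat set list \<Rightarrow> nat \<Rightarrow> real" where
  "door_prob phi \<pi> k c n = phiz phi k (door_inputs \<pi> k c n)"

lemma valid_door_inputs: "valid_input k (door_inputs \<pi> k c n)"
  unfolding valid_input_def door_inputs_def by auto

lemma door_prob_0 [simp]: "door_prob phi \<pi> k c 0 = 0"
  unfolding door_prob_def door_inputs_def phiz_def by simp

lemma door_prob_Suc_other: "\<pi> n \<noteq> k \<Longrightarrow> door_prob phi \<pi> k c (Suc n) = door_prob phi \<pi> k c n"
  unfolding door_prob_def door_inputs_def by simp

lemma door_prob_bounds:
  assumes "monotone_correlated d phi" "k \<in> {1..d}"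
  shows "0 \<le> door_prob phi \<pi> k c n" "door_prob phi \<pi> k c n \<le> 1"
  unfolding door_prob_def by (rule monotone_correlated_bounds[OF assms valid_door_inputs])+

lemma door_prob_mono:
  assumes "monotone_correlated d phi" "k \<in> {1..d}" "n \<le> m"
  shows "door_prob phi \<pi> k c n \<le> door_prob phi \<pi> k c m"
proof -
  have "[0..<m] = [0..<n] @ [n..<m]"
    using assms(3) upt_add_eq_append[of 0 n "m - n"] by simp
  then have "subseq (door_inputs \<pi> k c n) (door_inputs \<pi> k c m)"
    unfolding door_inputs_def by (simp add: subseq_rev_drop_many)
  then show ?thesis
    unfolding door_prob_def
    by (rule monotone_correlated_subseq[OF assms(1,2) valid_door_inputs valid_door_inputs])
qed

lemma door_prob_subsets:
  assumes "monotone_correlated d phi" "k \<in> {1..d}" "list_all2 (\<subseteq>) c1 c2" "n \<le> length c1"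
  shows "door_prob phi \<pi> k c1 n \<le> door_prob phi \<pi> k c2 n"
proof -
  have "list_all2 (\<subseteq>) (door_inputs \<pi> k c1 n) (door_inputs \<pi> k c2 n)"
    unfolding door_inputs_def list.rel_map
  proof (intro list.rel_refl_strong)
    fix r assume "r \<in> set (filter (\<lambda>r. \<pi> r = k) [0..<n])"
    then have "r < length c1" using assms(4) by auto
    then show "c1 ! r \<inter> {1..<k} \<subseteq> c2 ! r \<inter> {1..<k}"
      using assms(3) by (auto simp: list_all2_conv_all_nth)
  qed
  then show ?thesis
    unfolding door_prob_def
    by (rule monotone_correlated_subsets[OF assms(1,2) valid_door_inputs valid_door_inputs])
qed

definition door_factor ::
    "(nat \<Rightarrow> nat set list \<Rightarrow> real) \<Rightarrow> (nat \<Rightarrow> nat) \<Rightarrow> nat \<Rightarrow> nat set list \<Rightarrow> nat \<Rightarrow> real" where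
  "door_factor phi \<pi> k c s = (if \<pi> s = k then
      (if k \<in> c!s then (if k \<in> c!Suc s then 1 else 0)
       else (let q = (door_prob phi \<pi> k c (Suc s) - door_prob phi \<pi> k c s)
                     / (1 - door_prob phi \<pi> k c s)
             in if k \<in> c!Suc s then q else 1 - q))
     else (if (k \<in> c!Suc s) = (k \<in> c!s) then 1 else 0))"

lemma prod_indicator:
  "finite A \<Longrightarrow> (\<Prod>k\<in>A. (if P k then 1 else 0::real)) = (if \<forall>k\<in>A. P k then 1 else 0)"
  by (induction A rule: finite_induct) auto

lemma step_prob_eq_prod_door_factor:
  assumes "Suc s < length c" "c!s \<subseteq> {1..d}" "c!Suc s \<subseteq> {1..d}" "\<pi> s \<in> {1..d}"
  shows "step_prob phi \<pi> (take (Suc s) c) (c ! Suc s) = (\<Prod>k\<in>{1..d}. door_factor phi \<pi> k c s)"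
proof -
  define i S S' where "i = \<pi> s" and "S = c!s" and "S' = c!Suc s"
  define q where "q = (door_prob phi \<pi> i c (Suc s) - door_prob phi \<pi> i c s)
                      / (1 - door_prob phi \<pi> i c s)"
  have inputs: "map (\<lambda>r. take (Suc s) c ! r \<inter> {1..<i}) (filter (\<lambda>r. \<pi> r = i) [0..<Suc s])
      = door_inputs \<pi> i c (Suc s)"
    unfolding door_inputs_def by (rule map_cong) (auto simp del: upt_Suc)
  have butlast: "butlast (door_inputs \<pi> i c (Suc s)) = door_inputs \<pi> i c s"
    unfolding door_inputs_def i_def by simp
  have len: "length (take (Suc s) c) = Suc s"
    using assms(1) by simp
  then have last: "last (take (Suc s) c) = S"
    unfolding S_def by (subst last_conv_nth) auto
  have step: "step_prob phi \<pi> (take (Suc s) c) S' = (if i \<in> S then (if S' = S then 1 else 0)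
      else if S' = insert i S then q else if S' = S then 1 - q else 0)"
    unfolding step_prob_def Let_def len diff_Suc_1 last
    unfolding i_def[symmetric] inputs butlast q_def door_prob_def ..
  have others: "(\<Prod>k\<in>{1..d}-{i}. door_factor phi \<pi> k c s)
      = (if \<forall>k\<in>{1..d}-{i}. (k \<in> S') = (k \<in> S) then 1 else 0)"
    unfolding door_factor_def S_def S'_def i_def
    by (subst prod_indicator[symmetric]) (auto intro!: prod.cong)
  have "(\<Prod>k\<in>{1..d}. door_factor phi \<pi> k c s)
      = door_factor phi \<pi> i c s * (\<Prod>k\<in>{1..d}-{i}. door_factor phi \<pi> k c s)"
    using assms(4) unfolding i_def by (simp add: prod.remove)
  moreover have "door_factor phi \<pi> i c s
      = (if i \<in> S then (if i \<in> S' then 1 else 0) else if i \<in> S' then q else 1 - q)"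
    unfolding door_factor_def q_def Let_def S_def S'_def i_def by simp
  moreover have "S' = S \<longleftrightarrow> (i \<in> S' \<longleftrightarrow> i \<in> S) \<and> (\<forall>k\<in>{1..d}-{i}. (k \<in> S') = (k \<in> S))"
    and "S' = insert i S \<longleftrightarrow> i \<in> S' \<and> (\<forall>k\<in>{1..d}-{i}. (k \<in> S') = (k \<in> S))"
    using assms unfolding S_def S'_def i_def by blast+
  ultimately show ?thesis
    unfolding S'_def[symmetric] step others by (cases "i \<in> S"; cases "i \<in> S'") auto
qed

definition door_weight ::
    "(nat \<Rightarrow> nat set list \<Rightarrow> real) \<Rightarrow> (nat \<Rightarrow> nat) \<Rightarrow> nat \<Rightarrow> nat \<Rightarrow> nat set list \<Rightarrow> real" where
  "door_weight phi \<pi> N k c = (if k \<in> c!0 then 0 else 1) * (\<Prod>s<N. door_factor phi \<pi> k c s)"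

definition history_weight ::
    "(nat \<Rightarrow> nat set list \<Rightarrow> real) \<Rightarrow> (nat \<Rightarrow> nat) \<Rightarrow> nat \<Rightarrow> nat \<Rightarrow> nat set list \<Rightarrow> real" where
  "history_weight phi \<pi> N k c = (\<Prod>j\<in>{1..k}. door_weight phi \<pi> N j c)"

lemma hist_prob_rev_eq_history_weight:
  assumes "c \<in> histories N d" "knock_seq d \<pi>"
  shows "hist_prob phi \<pi> (rev c) = history_weight phi \<pi> N d c"
proof -
  have len: "length c = Suc N" and sub: "\<And>r. r < Suc N \<Longrightarrow> c!r \<subseteq> {1..d}"
    using length_histories nth_histories assms(1) by blast+
  have "(if c!0 = {} then 1 else 0::real) = (\<Prod>k\<in>{1..d}. (if k \<notin> c!0 then 1 else 0))"
    using sub[of 0] by (subst prod_indicator) auto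
  also have "\<dots> = (\<Prod>k\<in>{1..d}. (if k \<in> c!0 then 0 else 1))"
    by (rule prod.cong) auto
  finally have empty: "(if c!0 = {} then 1 else 0::real) = \<dots>" .
  have steps: "(\<Prod>s<N. step_prob phi \<pi> (take (Suc s) c) (c ! Suc s))
      = (\<Prod>s<N. \<Prod>k\<in>{1..d}. door_factor phi \<pi> k c s)"
    using len sub assms(2)
    by (intro prod.cong refl step_prob_eq_prod_door_factor) (auto simp: knock_seq_def)
  have "hist_prob phi \<pi> (rev c) = (if c!0 = {} then 1 else 0) *
     (\<Prod>s<length c - 1. step_prob phi \<pi> (take (Suc s) c) (c ! Suc s))"
    using len by (intro hist_prob_rev) auto
  also have "\<dots> = (\<Prod>k\<in>{1..d}. if k \<in> c!0 then 0 else 1)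
      * (\<Prod>k\<in>{1..d}. \<Prod>s<N. door_factor phi \<pi> k c s)"
    unfolding empty len diff_Suc_1 steps by (subst prod.swap) simp
  also have "\<dots> = history_weight phi \<pi> N d c"
    unfolding history_weight_def door_weight_def by (simp add: prod.distrib)
  finally show ?thesis .
qed

definition unfinished :: "nat \<Rightarrow> nat set list \<Rightarrow> real" where
  "unfinished d c = (if last c = {1..d} then 0 else 1)"

lemma not_done_prob_eq_sum_histories:
  assumes "knock_seq d \<pi>"
  shows "not_done_prob d phi \<pi> N
    = (\<Sum>c\<in>histories N d. history_weight phi \<pi> N d c * unfinished d c)"
proof -
  have "{h. length h = Suc N \<and> (\<forall>S\<in>set h. S \<subseteq> {1..d})} = rev ` histories N d"
    unfolding histories_def by (force intro: image_eqI[where x = "rev h" for h])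
  then have "not_done_prob d phi \<pi> N
      = (\<Sum>c\<in>histories N d. if hd (rev c) = {1..d} then 0 else hist_prob phi \<pi> (rev c))"
    unfolding not_done_prob_def by (simp add: sum.reindex inj_on_def)
  also have "\<dots> = (\<Sum>c\<in>histories N d. history_weight phi \<pi> N d c * unfinished d c)"
    using hist_prob_rev_eq_history_weight[OF _ assms]
    by (intro sum.cong) (auto simp: histories_def unfinished_def hd_rev)
  finally show ?thesis .
qed

text \<open>In add_door k c b, b!r tells whether door k is open before knock r.\<close>

definition add_door :: "nat \<Rightarrow> nat set list \<Rightarrow> bool list \<Rightarrow> nat set list" where
  "add_door k c b = map (\<lambda>r. if b!r then insert k (c!r) else c!r) [0..<length c]"

definition door_traces :: "nat \<Rightarrow> bool list set" where
  "door_traces N = {b. length b = Suc N}"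

lemma finite_door_traces: "finite (door_traces N)"
  using finite_lists_length_eq[of "UNIV :: bool set" "Suc N"] unfolding door_traces_def by simp

lemma length_add_door [simp]: "length (add_door k c b) = length c"
  unfolding add_door_def by simp

lemma nth_add_door: "r < length c \<Longrightarrow> add_door k c b ! r = (if b!r then insert k (c!r) else c!r)"
  unfolding add_door_def by simp

lemma not_mem_histories_pred:
  assumes "c \<in> histories N (k-1)" "r < Suc N"
  shows "k \<notin> c!r"
proof
  assume "k \<in> c!r"
  with nth_histories[OF assms] have "k \<in> {1..k-1}" by blast
  then show False by auto
qed

lemma mem_add_door_self:
  assumes "c \<in> histories N (k-1)" "r < Suc N"
  shows "k \<in> add_door k c b ! r \<longleftrightarrow> b!r"
  using not_mem_histories_pred[OF assms] assms by (simp add: nth_add_door length_histories)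

lemma add_door_mem_histories:
  assumes "c \<in> histories N (k-1)" "1 \<le> k"
  shows "add_door k c b \<in> histories N k"
  unfolding histories_def
proof (intro CollectI conjI ballI)
  show "length (add_door k c b) = Suc N" using assms(1) by (simp add: length_histories)
  fix S assume "S \<in> set (add_door k c b)"
  then obtain r where r: "r < Suc N" "S = add_door k c b ! r"
    using assms(1) by (auto simp: in_set_conv_nth length_histories)
  have "{1..k-1} \<subseteq> {1..k}" by auto
  then have "c!r \<subseteq> {1..k}" using nth_histories[OF assms(1) r(1)] by blast
  then show "S \<subseteq> {1..k}" using r assms by (auto simp: nth_add_door length_histories)
qed

lemma remove_door_add_door:
  assumes "c \<in> histories N (k-1)"
  shows "map (\<lambda>S. S - {k}) (add_door k c b) = c"
  using not_mem_histories_pred[OF assms] length_histories[OF assms]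
  by (intro nth_equalityI) (auto simp: nth_add_door)

lemma door_trace_add_door:
  assumes "c \<in> histories N (k-1)" "b \<in> door_traces N"
  shows "map (\<lambda>S. k \<in> S) (add_door k c b) = b"
  using mem_add_door_self[OF assms(1)] assms
  by (intro nth_equalityI) (auto simp: door_traces_def length_histories)

lemma add_door_remove_door: "add_door k (map (\<lambda>S. S - {k}) c) (map (\<lambda>S. k \<in> S) c) = c"
  by (intro nth_equalityI) (auto simp: nth_add_door)

lemma bij_betw_add_door:
  assumes "1 \<le> k"
  shows "bij_betw (\<lambda>(c, b). add_door k c b) (histories N (k-1) \<times> door_traces N) (histories N k)"
proof (rule bij_betw_byWitness[where f' = "\<lambda>c. (map (\<lambda>S. S - {k}) c, map (\<lambda>S. k \<in> S) c)"])
  have "map (\<lambda>S. S - {k}) c \<in> histories N (k-1)" if "c \<in> histories N k" for c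
    using that unfolding histories_def by fastforce
  moreover have "map (\<lambda>S. k \<in> S) c \<in> door_traces N" if "c \<in> histories N k" for c
    using that unfolding histories_def door_traces_def by auto
  ultimately show "(\<lambda>c. (map (\<lambda>S. S - {k}) c, map (\<lambda>S. k \<in> S) c)) ` histories N k
      \<subseteq> histories N (k-1) \<times> door_traces N"
    by blast
qed (auto simp: add_door_remove_door remove_door_add_door door_trace_add_door
    add_door_mem_histories[OF _ assms])

lemma sum_histories_add_door:
  assumes "1 \<le> k"
  shows "sum F (histories N k) = (\<Sum>c\<in>histories N (k-1). \<Sum>b\<in>door_traces N. F (add_door k c b))"
  by (simp add: sum.cartesian_product case_prod_beta'
      sum.reindex_bij_betw[OF bij_betw_add_door[OF assms], symmetric])

lemma door_inputs_add_door:
  assumes "n \<le> length c" "j \<le> k"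
  shows "door_inputs \<pi> j (add_door k c b) n = door_inputs \<pi> j c n"
  unfolding door_inputs_def using assms by (intro map_cong) (auto simp: nth_add_door)

lemma door_prob_add_door:
  "n \<le> length c \<Longrightarrow> j \<le> k \<Longrightarrow> door_prob phi \<pi> j (add_door k c b) n = door_prob phi \<pi> j c n"
  unfolding door_prob_def by (simp add: door_inputs_add_door)

lemma door_weight_add_door:
  assumes "length c = Suc N" "j < k"
  shows "door_weight phi \<pi> N j (add_door k c b) = door_weight phi \<pi> N j c"
proof -
  have mem: "j \<in> add_door k c b ! r \<longleftrightarrow> j \<in> c!r" if "r < Suc N" for r
    using that assms by (auto simp: nth_add_door)
  have "door_factor phi \<pi> j (add_door k c b) s = door_factor phi \<pi> j c s" if "s < N" for s
    using that assms unfolding door_factor_def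
    by (simp add: mem door_prob_add_door)
  then show ?thesis
    unfolding door_weight_def by (simp add: mem)
qed

lemma history_weight_add_door:
  assumes "1 \<le> k" "length c = Suc N"
  shows "history_weight phi \<pi> N k (add_door k c b)
    = door_weight phi \<pi> N k (add_door k c b) * history_weight phi \<pi> N (k-1) c"
proof -
  have "{1..k} = insert k {1..k-1}" "k \<notin> {1..k-1}" using assms by auto
  then have "history_weight phi \<pi> N k (add_door k c b)
      = door_weight phi \<pi> N k (add_door k c b) * (\<Prod>j\<in>{1..k-1}. door_weight phi \<pi> N j (add_door k c b))"
    unfolding history_weight_def by simp
  also have "(\<Prod>j\<in>{1..k-1}. door_weight phi \<pi> N j (add_door k c b)) = history_weight phi \<pi> N (k-1) c"
    unfolding history_weight_def using assms by (intro prod.cong) (auto simp: door_weight_add_door)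
  finally show ?thesis .
qed

definition door_average ::
    "(nat \<Rightarrow> nat set list \<Rightarrow> real) \<Rightarrow> (nat \<Rightarrow> nat) \<Rightarrow> nat \<Rightarrow> nat
      \<Rightarrow> (nat set list \<Rightarrow> real) \<Rightarrow> nat set list \<Rightarrow> real" where
  "door_average phi \<pi> N k G c =
     (\<Sum>b\<in>door_traces N. door_weight phi \<pi> N k (add_door k c b) * G (add_door k c b))"

text \<open>The conditional probability of not being finished given the history of the doors
  1, ..., d - j, obtained by averaging out the doors d, d - 1, ..., d - j + 1.\<close>

fun cond_unfinished ::
    "(nat \<Rightarrow> nat set list \<Rightarrow> real) \<Rightarrow> (nat \<Rightarrow> nat) \<Rightarrow> nat \<Rightarrow> nat \<Rightarrow> nat \<Rightarrow> nat set list \<Rightarrow> real" where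
  "cond_unfinished phi \<pi> N d 0 = unfinished d"
| "cond_unfinished phi \<pi> N d (Suc j) = door_average phi \<pi> N (d - j) (cond_unfinished phi \<pi> N d j)"

lemma sum_histories_peel:
  assumes "j \<le> d"
  shows "(\<Sum>c\<in>histories N d. history_weight phi \<pi> N d c * unfinished d c)
    = (\<Sum>c\<in>histories N (d-j). history_weight phi \<pi> N (d-j) c * cond_unfinished phi \<pi> N d j c)"
  using assms
proof (induction j)
  case 0 then show ?case by simp
next
  case (Suc j)
  define k where "k = d - j"
  have k: "1 \<le> k" "d - Suc j = k - 1" using Suc.prems unfolding k_def by auto
  have "(\<Sum>c\<in>histories N k. history_weight phi \<pi> N k c * cond_unfinished phi \<pi> N d j c)
      = (\<Sum>c\<in>histories N (k-1). \<Sum>b\<in>door_traces N.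
          history_weight phi \<pi> N k (add_door k c b) * cond_unfinished phi \<pi> N d j (add_door k c b))"
    by (rule sum_histories_add_door[OF k(1)])
  also have "\<dots> = (\<Sum>c\<in>histories N (k-1).
      history_weight phi \<pi> N (k-1) c * cond_unfinished phi \<pi> N d (Suc j) c)"
    unfolding cond_unfinished.simps door_average_def sum_distrib_left k_def[symmetric]
    using k(1) by (intro sum.cong refl) (simp add: history_weight_add_door length_histories)
  finally show ?case using Suc unfolding k_def k(2)[unfolded k_def] by simp
qed

lemma not_done_prob_eq_cond_unfinished:
  assumes "knock_seq d \<pi>"
  shows "not_done_prob d phi \<pi> N = cond_unfinished phi \<pi> N d d (replicate (Suc N) {})"
proof -
  have "not_done_prob d phi \<pi> N
      = (\<Sum>c\<in>histories N (d-d). history_weight phi \<pi> N (d-d) c * cond_unfinished phi \<pi> N d d c)"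
    unfolding not_done_prob_eq_sum_histories[OF assms] by (rule sum_histories_peel) simp
  then show ?thesis by (simp add: histories_0 history_weight_def)
qed

text \<open>The mean of w(T), truncated at n, for an opening time T with P(T < t) = f t.\<close>

definition opening_mean :: "(nat \<Rightarrow> real) \<Rightarrow> (nat \<Rightarrow> real) \<Rightarrow> nat \<Rightarrow> real" where
  "opening_mean f w n = (\<Sum>t<n. (f (Suc t) - f t) * w t) + (1 - f n) * w n"

lemma opening_mean_abel:
  "opening_mean f w n = w n - f 0 * w 0 + (\<Sum>t<n. f (Suc t) * (w t - w (Suc t)))"
  unfolding opening_mean_def by (induction n) (simp_all add: algebra_simps)

lemma opening_mean_mono_prob:
  assumes "f 0 = g 0" "\<And>t. t \<le> n \<Longrightarrow> g t \<le> f t" "\<And>t. t < n \<Longrightarrow> w t \<le> w (Suc t)"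
  shows "opening_mean f w n \<le> opening_mean g w n"
proof -
  have "(\<Sum>t<n. f (Suc t) * (w t - w (Suc t))) \<le> (\<Sum>t<n. g (Suc t) * (w t - w (Suc t)))"
    using assms(2,3) by (intro sum_mono mult_right_mono_neg) auto
  then show ?thesis unfolding opening_mean_abel using assms(1) by simp
qed

lemma opening_mean_mono_value:
  assumes "\<And>t. t < n \<Longrightarrow> f t \<le> f (Suc t)" "f n \<le> 1" "\<And>t. t \<le> n \<Longrightarrow> w t \<le> w' t"
  shows "opening_mean f w n \<le> opening_mean f w' n"
  unfolding opening_mean_def using assms
  by (intro add_mono sum_mono mult_left_mono) auto

definition opening_seq :: "nat \<Rightarrow> nat \<Rightarrow> bool list" where
  "opening_seq N t = map (\<lambda>r. t < r) [0..<Suc N]"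

lemma length_opening_seq [simp]: "length (opening_seq N t) = Suc N"
  unfolding opening_seq_def by simp

lemma nth_opening_seq: "r < Suc N \<Longrightarrow> opening_seq N t ! r \<longleftrightarrow> t < r"
  unfolding opening_seq_def by (simp del: upt_Suc)

lemma opening_seq_door_traces: "opening_seq N t \<in> door_traces N"
  unfolding door_traces_def by simp

lemma inj_on_opening_seq: "inj_on (opening_seq N) {..N}"
proof (rule inj_onI)
  fix t u assume tu: "t \<in> {..N}" "u \<in> {..N}" and eq: "opening_seq N t = opening_seq N u"
  have key: "t < r \<longleftrightarrow> u < r" if "r \<le> N" for r
    using eq that by (metis less_Suc_eq_le nth_opening_seq)
  show "t = u"
  proof (rule ccontr)
    assume "t \<noteq> u"
    then show False using key[of "Suc (min t u)"] tu by (cases "t < u") auto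
  qed
qed

lemma monotone_trace_eq_opening_seq:
  assumes "length b = Suc N" "\<not> b!0" "\<And>s. s < N \<Longrightarrow> b!s \<Longrightarrow> b!Suc s"
  shows "b \<in> opening_seq N ` {..N}"
proof (cases "\<exists>r\<le>N. b!r")
  case False
  then have "b = opening_seq N N"
    using assms(1) by (intro nth_equalityI) (auto simp: nth_opening_seq)
  then show ?thesis by blast
next
  case True
  define r0 where "r0 = (LEAST r. r \<le> N \<and> b!r)"
  have r0: "r0 \<le> N" "b!r0"
    using LeastI_ex[OF True] unfolding r0_def by auto
  have before: "\<not> b!r" if "r < r0" for r
    using not_less_Least[OF that[unfolded r0_def]] that r0 by simp
  have after: "b!r" if "r0 \<le> r" "r \<le> N" for r
    using that by (induction r rule: dec_induct) (use r0 assms(3) in auto)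
  have "0 < r0" using r0 assms(2) by (cases r0) auto
  have "b = opening_seq N (r0 - 1)"
  proof (rule nth_equalityI)
    fix r assume "r < length b"
    then show "b!r = opening_seq N (r0 - 1) ! r"
      using assms(1) before[of r] after[of r] \<open>0 < r0\<close>
      by (cases "r0 \<le> r") (auto simp: nth_opening_seq)
  qed (use assms(1) in simp)
  with r0 show ?thesis by auto
qed

lemma door_trace_support:
  assumes c: "c \<in> histories N (k-1)" and b: "b \<in> door_traces N"
    and nonzero: "door_weight phi \<pi> N k (add_door k c b) \<noteq> 0"
  shows "b \<in> opening_seq N ` {..N}"
proof (rule monotone_trace_eq_opening_seq)
  show "length b = Suc N" using b unfolding door_traces_def by simp
  have mem: "k \<in> add_door k c b ! r \<longleftrightarrow> b!r" if "r < Suc N" for r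
    using mem_add_door_self[OF c that] .
  show "\<not> b!0" using nonzero mem[of 0] unfolding door_weight_def by auto
  fix s assume "s < N" "b!s"
  then have "door_factor phi \<pi> k (add_door k c b) s \<noteq> 0"
    using nonzero unfolding door_weight_def by auto
  then show "b!Suc s"
    using mem[of s] mem[of "Suc s"] \<open>s < N\<close> \<open>b!s\<close>
    unfolding door_factor_def by (auto split: if_splits)
qed

text \<open>Also when a = 1, where the quotient is the junk value 0: then a' = 1 as well.\<close>

lemma mult_cond_prob:
  fixes a a' :: real
  assumes "a \<le> a'" "a' \<le> 1"
  shows "(1 - a) * ((a' - a) / (1 - a)) = a' - a"
  using assms by (cases "a = 1") auto

lemma door_weight_prefix_opening_seq:
  assumes phi: "monotone_correlated d phi" and k: "k \<in> {1..d}" and c: "c \<in> histories N (k-1)"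
    and "t \<le> N" "n \<le> N"
  defines "cc \<equiv> add_door k c (opening_seq N t)"
  shows "(if k \<in> cc!0 then 0 else 1) * (\<Prod>s<n. door_factor phi \<pi> k cc s)
     = (if t < n then door_prob phi \<pi> k c (Suc t) - door_prob phi \<pi> k c t
        else 1 - door_prob phi \<pi> k c n)"
  using \<open>n \<le> N\<close>
proof (induction n)
  case 0
  show ?case unfolding cc_def using mem_add_door_self[OF c] by (simp add: nth_opening_seq)
next
  case (Suc n)
  define a a' where "a = door_prob phi \<pi> k c n" and "a' = door_prob phi \<pi> k c (Suc n)"
  have mem: "k \<in> cc!r \<longleftrightarrow> t < r" if "r < Suc N" for r
    unfolding cc_def using mem_add_door_self[OF c that] that by (simp add: nth_opening_seq)
  have "door_prob phi \<pi> k cc m = door_prob phi \<pi> k c m" if "m \<le> Suc N" for m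
    unfolding cc_def using that length_histories[OF c] by (simp add: door_prob_add_door)
  then have prob: "door_prob phi \<pi> k cc n = a" "door_prob phi \<pi> k cc (Suc n) = a'"
    using Suc.prems unfolding a_def a'_def by simp_all
  define q where "q = (a' - a) / (1 - a)"
  have "a \<le> a'" "a' \<le> 1"
    unfolding a_def a'_def by (auto intro: door_prob_mono[OF phi k] door_prob_bounds[OF phi k])
  then have q: "(1 - a) * q = a' - a"
    unfolding q_def by (rule mult_cond_prob)
  then have q': "(1 - a) * (1 - q) = 1 - a'"
    by (simp add: algebra_simps)
  have factor: "door_factor phi \<pi> k cc n = (if t < n then 1 else if \<pi> n = k then
      (if t = n then q else 1 - q) else if t = n then 0 else 1)"
    using mem[of n] mem[of "Suc n"] Suc.prems unfolding door_factor_def prob Let_def q_def by auto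
  have other: "\<pi> n \<noteq> k \<Longrightarrow> a' = a"
    unfolding a_def a'_def by (rule door_prob_Suc_other)
  have "(if k \<in> cc!0 then 0 else 1) * (\<Prod>s<Suc n. door_factor phi \<pi> k cc s)
      = (if t < n then door_prob phi \<pi> k c (Suc t) - door_prob phi \<pi> k c t else 1 - a)
        * door_factor phi \<pi> k cc n"
    using Suc unfolding a_def by simp
  also have "\<dots> = (if t < Suc n then door_prob phi \<pi> k c (Suc t) - door_prob phi \<pi> k c t
      else 1 - a')"
    unfolding factor using q q' other a_def a'_def
    by (cases "t < n"; cases "t = n"; cases "\<pi> n = k") auto
  finally show ?case unfolding a'_def .
qed

lemma door_average_eq_opening_mean:
  assumes phi: "monotone_correlated d phi" and k: "k \<in> {1..d}" and c: "c \<in> histories N (k-1)"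
  shows "door_average phi \<pi> N k G c
    = opening_mean (door_prob phi \<pi> k c) (\<lambda>t. G (add_door k c (opening_seq N t))) N"
proof -
  define f where "f b = door_weight phi \<pi> N k (add_door k c b) * G (add_door k c b)" for b
  have weight: "door_weight phi \<pi> N k (add_door k c (opening_seq N t))
      = (if t < N then door_prob phi \<pi> k c (Suc t) - door_prob phi \<pi> k c t
         else 1 - door_prob phi \<pi> k c N)" if "t \<le> N" for t
    unfolding door_weight_def using door_weight_prefix_opening_seq[OF phi k c that order_refl] .
  have "door_average phi \<pi> N k G c = sum f (opening_seq N ` {..N})"
    unfolding door_average_def f_def[symmetric]
    using door_trace_support[OF c] opening_seq_door_traces
    by (intro sum.mono_neutral_right[OF finite_door_traces]) (auto simp: f_def)
  also have "\<dots> = (\<Sum>t\<le>N. f (opening_seq N t))"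
    by (simp add: sum.reindex[OF inj_on_opening_seq])
  also have "\<dots> = (\<Sum>t<N. f (opening_seq N t)) + f (opening_seq N N)"
    by (simp flip: lessThan_Suc_atMost)
  also have "\<dots> = opening_mean (door_prob phi \<pi> k c) (\<lambda>t. G (add_door k c (opening_seq N t))) N"
    unfolding opening_mean_def f_def by (simp add: weight)
  finally show ?thesis .
qed

definition antitone_histories :: "nat \<Rightarrow> nat \<Rightarrow> (nat set list \<Rightarrow> real) \<Rightarrow> bool" where
  "antitone_histories N k G \<longleftrightarrow>
     (\<forall>c1\<in>histories N k. \<forall>c2\<in>histories N k. list_all2 (\<subseteq>) c1 c2 \<longrightarrow> G c2 \<le> G c1)"

lemma add_door_subsets:
  "list_all2 (\<subseteq>) c1 c2 \<Longrightarrow> list_all2 (\<subseteq>) (add_door k c1 b) (add_door k c2 b)"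
  by (auto simp: list_all2_conv_all_nth nth_add_door)

lemma antitone_histories_opening_time:
  assumes "antitone_histories N k G" "c \<in> histories N (k-1)" "1 \<le> k" "t < N"
  shows "G (add_door k c (opening_seq N t)) \<le> G (add_door k c (opening_seq N (Suc t)))"
proof -
  have "list_all2 (\<subseteq>) (add_door k c (opening_seq N (Suc t))) (add_door k c (opening_seq N t))"
    using length_histories[OF assms(2)]
    by (auto simp: list_all2_conv_all_nth nth_add_door nth_opening_seq)
  then show ?thesis
    using assms add_door_mem_histories unfolding antitone_histories_def by blast
qed

lemma door_average_antitone:
  assumes phi: "monotone_correlated d phi" and k: "k \<in> {1..d}" and G: "antitone_histories N k G"
  shows "antitone_histories N (k-1) (door_average phi \<pi> N k G)"
  unfolding antitone_histories_def
proof (intro ballI impI)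
  fix c1 c2 assume c1: "c1 \<in> histories N (k-1)" and c2: "c2 \<in> histories N (k-1)"
    and le: "list_all2 (\<subseteq>) c1 c2"
  have k1: "1 \<le> k" using k by simp
  define w1 w2 where "w1 t = G (add_door k c1 (opening_seq N t))"
    and "w2 t = G (add_door k c2 (opening_seq N t))" for t
  have "door_average phi \<pi> N k G c2 = opening_mean (door_prob phi \<pi> k c2) w2 N"
    unfolding w2_def by (rule door_average_eq_opening_mean[OF phi k c2])
  also have "\<dots> \<le> opening_mean (door_prob phi \<pi> k c2) w1 N"
  proof (rule opening_mean_mono_value)
    show "door_prob phi \<pi> k c2 t \<le> door_prob phi \<pi> k c2 (Suc t)" for t
      by (rule door_prob_mono[OF phi k]) simp
    show "door_prob phi \<pi> k c2 N \<le> 1" by (rule door_prob_bounds[OF phi k])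
    show "w2 t \<le> w1 t" for t
      using G add_door_subsets[OF le] add_door_mem_histories[OF c1 k1] add_door_mem_histories[OF c2 k1]
      unfolding w1_def w2_def antitone_histories_def by blast
  qed
  also have "\<dots> \<le> opening_mean (door_prob phi \<pi> k c1) w1 N"
  proof (rule opening_mean_mono_prob)
    show "door_prob phi \<pi> k c1 t \<le> door_prob phi \<pi> k c2 t" if "t \<le> N" for t
      using that length_histories[OF c1] by (intro door_prob_subsets[OF phi k le]) simp
    show "w1 t \<le> w1 (Suc t)" if "t < N" for t
      unfolding w1_def by (rule antitone_histories_opening_time[OF G c1 k1 that])
  qed simp
  also have "\<dots> = door_average phi \<pi> N k G c1"
    unfolding w1_def by (rule door_average_eq_opening_mean[OF phi k c1, symmetric])
  finally show "door_average phi \<pi> N k G c2 \<le> door_average phi \<pi> N k G c1" .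
qed

lemma door_average_mono:
  assumes phiA: "monotone_correlated d phiA" and phiB: "monotone_correlated d phiB"
    and k: "k \<in> {1..d}"
    and dom: "\<And>xs. valid_input k xs \<Longrightarrow> phiz phiB k xs \<le> phiz phiA k xs"
    and GG: "\<And>c. c \<in> histories N k \<Longrightarrow> GA c \<le> GB c" and GB: "antitone_histories N k GB"
    and c: "c \<in> histories N (k-1)"
  shows "door_average phiA \<pi> N k GA c \<le> door_average phiB \<pi> N k GB c"
proof -
  have k1: "1 \<le> k" using k by simp
  define wA wB where "wA t = GA (add_door k c (opening_seq N t))"
    and "wB t = GB (add_door k c (opening_seq N t))" for t
  have "door_average phiA \<pi> N k GA c = opening_mean (door_prob phiA \<pi> k c) wA N"
    unfolding wA_def by (rule door_average_eq_opening_mean[OF phiA k c])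
  also have "\<dots> \<le> opening_mean (door_prob phiA \<pi> k c) wB N"
  proof (rule opening_mean_mono_value)
    show "door_prob phiA \<pi> k c t \<le> door_prob phiA \<pi> k c (Suc t)" for t
      by (rule door_prob_mono[OF phiA k]) simp
    show "door_prob phiA \<pi> k c N \<le> 1" by (rule door_prob_bounds[OF phiA k])
    show "wA t \<le> wB t" for t
      unfolding wA_def wB_def by (rule GG[OF add_door_mem_histories[OF c k1]])
  qed
  also have "\<dots> \<le> opening_mean (door_prob phiB \<pi> k c) wB N"
  proof (rule opening_mean_mono_prob)
    show "door_prob phiB \<pi> k c t \<le> door_prob phiA \<pi> k c t" for t
      unfolding door_prob_def by (rule dom[OF valid_door_inputs])
    show "wB t \<le> wB (Suc t)" if "t < N" for t
      unfolding wB_def by (rule antitone_histories_opening_time[OF GB c k1 that])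
  qed simp
  also have "\<dots> = door_average phiB \<pi> N k GB c"
    unfolding wB_def by (rule door_average_eq_opening_mean[OF phiB k c, symmetric])
  finally show ?thesis .
qed

lemma unfinished_antitone: "antitone_histories N d (unfinished d)"
  unfolding antitone_histories_def
proof (intro ballI impI)
  fix c1 c2 assume c1: "c1 \<in> histories N d" and c2: "c2 \<in> histories N d"
    and le: "list_all2 (\<subseteq>) c1 c2"
  have "last c1 = c1 ! N" "last c2 = c2 ! N"
    using length_histories[OF c1] length_histories[OF c2] by (subst last_conv_nth; auto)+
  moreover have "c1 ! N \<subseteq> c2 ! N" using le length_histories[OF c1]
    by (auto simp: list_all2_conv_all_nth)
  moreover have "c2 ! N \<subseteq> {1..d}" by (rule nth_histories[OF c2]) simp
  ultimately show "unfinished d c2 \<le> unfinished d c1" unfolding unfinished_def by auto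
qed

lemma cond_unfinished_antitone:
  assumes "monotone_correlated d phi" "j \<le> d"
  shows "antitone_histories N (d-j) (cond_unfinished phi \<pi> N d j)"
  using assms(2)
proof (induction j)
  case 0
  show ?case using unfinished_antitone by simp
next
  case (Suc j)
  then have "antitone_histories N (d - j - 1) (door_average phi \<pi> N (d - j) (cond_unfinished phi \<pi> N d j))"
    by (intro door_average_antitone[OF assms(1)]) auto
  moreover have "d - j - 1 = d - Suc j" by simp
  ultimately show ?case by simp
qed

lemma cond_unfinished_mono:
  assumes phiA: "monotone_correlated d phiA" and phiB: "monotone_correlated d phiB"
    and dom: "\<And>k xs. k \<in> {1..d} \<Longrightarrow> valid_input k xs \<Longrightarrow> phiz phiB k xs \<le> phiz phiA k xs"
    and "j \<le> d" "c \<in> histories N (d-j)"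
  shows "cond_unfinished phiA \<pi> N d j c \<le> cond_unfinished phiB \<pi> N d j c"
  using assms(4,5)
proof (induction j arbitrary: c)
  case 0 then show ?case by simp
next
  case (Suc j)
  have k: "d - j \<in> {1..d}" using Suc.prems by auto
  show ?case unfolding cond_unfinished.simps
  proof (rule door_average_mono[OF phiA phiB k])
    show "phiz phiB (d - j) xs \<le> phiz phiA (d - j) xs" if "valid_input (d - j) xs" for xs
      by (rule dom[OF k that])
    show "cond_unfinished phiA \<pi> N d j c' \<le> cond_unfinished phiB \<pi> N d j c'"
      if "c' \<in> histories N (d - j)" for c'
      using Suc that by simp
    show "antitone_histories N (d - j) (cond_unfinished phiB \<pi> N d j)"
      using Suc.prems by (intro cond_unfinished_antitone[OF phiB]) simp
    have "d - j - 1 = d - Suc j" by simp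
    then show "c \<in> histories N (d - j - 1)" using Suc.prems by simp
  qed
qed

lemma exp_time_mono:
  assumes "monotone_correlated d phiA" "monotone_correlated d phiB" "knock_seq d \<pi>"
    and "\<And>k xs. k \<in> {1..d} \<Longrightarrow> valid_input k xs \<Longrightarrow> phiz phiB k xs \<le> phiz phiA k xs"
  shows "exp_time d phiA \<pi> \<le> exp_time d phiB \<pi>"
proof -
  have "not_done_prob d phiA \<pi> N \<le> not_done_prob d phiB \<pi> N" for N
    unfolding not_done_prob_eq_cond_unfinished[OF assms(3)]
    by (rule cond_unfinished_mono[OF assms(1,2,4)]) (simp_all add: histories_0)
  then show ?thesis
    unfolding exp_time_def by (intro suminf_le ennreal_leI) auto
qed

lemma opt_time_mono:
  assumes "monotone_correlated d phiA" "monotone_correlated d phiB"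
    and "\<And>k xs. k \<in> {1..d} \<Longrightarrow> valid_input k xs \<Longrightarrow> phiz phiB k xs \<le> phiz phiA k xs"
  shows "opt_time d phiA \<le> opt_time d phiB"
  unfolding opt_time_def using exp_time_mono[OF assms(1,2) _ assms(3)] by (intro INF_mono) auto

lemma similar_full_inputs:
  assumes "similar d phi psi" "k \<in> {1..d}"
  shows "phiz phi k (replicate n {1..<k}) = phiz psi k (replicate n {1..<k})"
  using assms unfolding similar_def fund_def by force

lemma valid_input_replicate: "valid_input k (replicate n {1..<k})"
  unfolding valid_input_def by simp

lemma independent_dominates:
  assumes phi: "monotone_correlated d phi" and "similar d phi psi" "independent_config d psi"
    and k: "k \<in> {1..d}" and xs: "valid_input k xs"
  shows "phiz phi k xs \<le> phiz psi k xs"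
proof -
  have "list_all2 (\<subseteq>) xs (replicate (length xs) {1..<k})"
    using xs unfolding valid_input_def by (auto simp: list_all2_conv_all_nth nth_mem)
  then have "phiz phi k xs \<le> phiz phi k (replicate (length xs) {1..<k})"
    by (rule monotone_correlated_subsets[OF phi k valid_input_replicate xs])
  also have "\<dots> = phiz psi k xs"
    using assms(2,3) k xs similar_full_inputs[OF assms(2) k, of "length xs"]
    unfolding independent_config_def phiz_def by auto
  finally show ?thesis .
qed

lemma cascading_dominated:
  assumes phi: "monotone_correlated d phi" and "similar d phi psi" "cascading_config d psi"
    and k: "k \<in> {1..d}" and xs: "valid_input k xs"
  shows "phiz psi k xs \<le> phiz phi k xs"
proof -
  define full where "full = filter (\<lambda>X. X = {1..<k}) xs"
  have full: "full = replicate (length full) {1..<k}"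
    unfolding full_def by (induction xs) auto
  then have "phiz psi k xs = phiz phi k full"
    using assms(3) k xs similar_full_inputs[OF assms(2) k, of "length full"]
    unfolding cascading_config_def full_def phiz_def by auto
  also have "\<dots> \<le> phiz phi k xs"
  proof (rule monotone_correlated_subseq[OF phi k xs])
    show "valid_input k full" using full valid_input_replicate by metis
    show "subseq full xs" unfolding full_def by (rule subseq_filter_left)
  qed
  finally show ?thesis .
qed

theorem mainTheorem1:
  fixes d :: nat
    and phiC phiX phiI :: "nat \<Rightarrow> nat set list \<Rightarrow> real"
  assumes "d \<ge> 2"
    and "configuration d phiC" and "configuration d phiX" and "configuration d phiI"
    and "similar d phiC phiX" and "similar d phiC phiI"
    and "cascading_config d phiX" and "independent_config d phiI"
  shows "(\<forall>\<pi>. knock_seq d \<pi> \<longrightarrow>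
            exp_time d phiI \<pi> \<le> exp_time d phiC \<pi> \<and> exp_time d phiC \<pi> \<le> exp_time d phiX \<pi>)
       \<and> opt_time d phiI \<le> opt_time d phiC \<and> opt_time d phiC \<le> opt_time d phiX"
proof -
  have C: "monotone_correlated d phiC" and X: "monotone_correlated d phiX"
    and I: "monotone_correlated d phiI"
    using assms(2-4) by (auto intro: configuration_imp_monotone_correlated)
  have IC: "\<And>k xs. k \<in> {1..d} \<Longrightarrow> valid_input k xs \<Longrightarrow> phiz phiC k xs \<le> phiz phiI k xs"
    by (rule independent_dominates[OF C assms(6,8)])
  have CX: "\<And>k xs. k \<in> {1..d} \<Longrightarrow> valid_input k xs \<Longrightarrow> phiz phiX k xs \<le> phiz phiC k xs"
    by (rule cascading_dominated[OF C assms(5,7)])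
  show ?thesis
    using exp_time_mono[OF I C _ IC] exp_time_mono[OF C X _ CX]
      opt_time_mono[OF I C IC] opt_time_mono[OF C X CX]
    by blast
qed

end
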